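(* Let $\alpha\in(0,1)$ be irrational and let $s_\alpha$ be a Sturmian word of angle $\alpha$. If $s_\alpha$ is $\beta$-power free for some $\beta\ge 2$, then $s_\alpha$ is uniformly abelian-square rich.
   Context: Alphabet $\{a,b\}$; $\{x\}=x-\lfloor x\rfloor$. For irrational $\alpha\in(0,1)$ and $\rho\in[0,1)$, the Sturmian word $s_{\alpha,\rho}=c_0c_1\cdots$ has $c_m=b$ if $\{\rho+m\alpha\}\in[0,1-\alpha)$ and $c_m=a$ otherwise (or with intervals $(0,1-\alpha]$ and $(1-\alpha,1]$); $s_\alpha$ denotes any such word. An infinite word is $\beta$-power free if for every nonempty factor $v$, the ratio of $|v|$ to the minimal period of $v$ is smaller than $\beta$. An abelian square is a word $v_1v_2$ with $v_1,v_2$ having the same numbers of each letter. An infinite word $w$ is uniformly abelian-square rich if there is a constant $C>0$ such that for all sufficiently large $n$, every factor of $w$ of length $n$ has at least $Cn^2$ distinct factors that are abelian squares. *)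

theory Defs
  imports Complex_Main
begin

datatype letter = a | b

definition sturmian_lower :: "real \<Rightarrow> real \<Rightarrow> nat \<Rightarrow> letter" where
  "sturmian_lower \<alpha> \<rho> m = (if frac (\<rho> + real m * \<alpha>) < 1 - \<alpha> then b else a)"

text \<open>Sturmian word with intervals (0,1-alpha] for b and (1-alpha,1] for a
  (the fractional part 0 is identified with 1).\<close>
definition sturmian_upper :: "real \<Rightarrow> real \<Rightarrow> nat \<Rightarrow> letter" where
  "sturmian_upper \<alpha> \<rho> m =
     (if 0 < frac (\<rho> + real m * \<alpha>) \<and> frac (\<rho> + real m * \<alpha>) \<le> 1 - \<alpha> then b else a)"

definition is_sturmian :: "real \<Rightarrow> (nat \<Rightarrow> letter) \<Rightarrow> bool" where
  "is_sturmian \<alpha> w \<longleftrightarrow> (\<exists>\<rho>. 0 \<le> \<rho> \<and> \<rho> < 1 \<and> (w = sturmian_lower \<alpha> \<rho> \<or> w = sturmian_upper \<alpha> \<rho>))"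

definition inf_factor :: "(nat \<Rightarrow> 'x) \<Rightarrow> nat \<Rightarrow> nat \<Rightarrow> 'x list" where
  "inf_factor w i n = map w [i..<i+n]"

definition is_factor :: "'x list \<Rightarrow> 'x list \<Rightarrow> bool" where
  "is_factor u v \<longleftrightarrow> (\<exists>xs ys. v = xs @ u @ ys)"

definition is_period :: "nat \<Rightarrow> 'x list \<Rightarrow> bool" where
  "is_period p v \<longleftrightarrow> 0 < p \<and> (\<forall>i. i + p < length v \<longrightarrow> v ! i = v ! (i + p))"

definition min_period :: "'x list \<Rightarrow> nat" where
  "min_period v = (LEAST p. is_period p v)"

definition power_free :: "real \<Rightarrow> (nat \<Rightarrow> 'x) \<Rightarrow> bool" where
  "power_free \<beta> w \<longleftrightarrow>
     (\<forall>i n. 0 < n \<longrightarrow> real n / real (min_period (inf_factor w i n)) < \<beta>)"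

definition abelian_square :: "'x list \<Rightarrow> bool" where
  "abelian_square u \<longleftrightarrow>
     (\<exists>v1 v2. u = v1 @ v2 \<and> (\<forall>c. count_list v1 c = count_list v2 c))"

definition unif_abelian_square_rich :: "(nat \<Rightarrow> 'x) \<Rightarrow> bool" where
  "unif_abelian_square_rich w \<longleftrightarrow>
     (\<exists>C::real. C > 0 \<and> (\<exists>N. \<forall>n \<ge> N. \<forall>i.
        real (card {u. is_factor u (inf_factor w i n) \<and> abelian_square u}) \<ge> C * real n ^ 2))"

end

theory Submission
  imports Defs
begin

text \<open>
  A Sturmian word of angle \<open>\<alpha>\<close> is balanced: every factor of length \<open>m\<close> contains
  \<open>\<lfloor>m\<alpha>\<rfloor>\<close> or \<open>\<lfloor>m\<alpha>\<rfloor> + 1\<close> letters \<open>a\<close>. If \<open>m\<alpha>\<close> lies within \<open>1/4\<close> of an integer, four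
  consecutive blocks of length \<open>m\<close> cannot alternate in their number of \<open>a\<close>'s, so two
  adjacent ones form an abelian square; hence a window of length \<open>n \<ge> 5m\<close> contains
  at least \<open>m\<close> starting positions of abelian squares of length \<open>2m\<close>. By pigeonhole every
  \<open>m\<close> has such a multiple \<open>jm\<close> with \<open>j \<le> 4\<close>, so there are \<open>\<Omega>(n)\<close> admissible lengths,
  each with \<open>\<Omega>(n)\<close> positions. Power-freeness forces two occurrences of the same factor
  of length \<open>2m\<close> to be more than \<open>2m/\<beta>\<close> apart, so only \<open>O(\<beta>)\<close> positions can share a
  factor, leaving \<open>\<Omega>(n\<^sup>2/\<beta>)\<close> distinct abelian squares.
\<close>

lemma length_inf_factor [simp]: "length (inf_factor w p m) = m"
  by (simp add: inf_factor_def)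

lemma inf_factor_Suc: "inf_factor w p (Suc m) = inf_factor w p m @ [w (p + m)]"
  by (simp add: inf_factor_def)

lemma inf_factor_add: "inf_factor w p (m + k) = inf_factor w p m @ inf_factor w (p + m) k"
proof -
  have "[p..<p + (m + k)] = [p..<p + m] @ [p + m..<p + (m + k)]"
    using upt_add_eq_append[of p "p + m" k] by (simp add: add.assoc)
  then show ?thesis by (simp add: inf_factor_def add.assoc)
qed

lemma is_factor_inf_factor:
  assumes "i \<le> p" "p + L \<le> i + n"
  shows "is_factor (inf_factor w p L) (inf_factor w i n)"
proof -
  have "inf_factor w i n =
      inf_factor w i (p - i) @ inf_factor w p L @ inf_factor w (p + L) (i + n - (p + L))"
    using inf_factor_add[of w i "p - i" "L + (i + n - (p + L))"]
      inf_factor_add[of w p L "i + n - (p + L)"] assms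
    by simp
  then show ?thesis unfolding is_factor_def by blast
qed

lemma finite_factors: "finite {u. is_factor u v}"
proof -
  have "{u. is_factor u v} \<subseteq> (\<lambda>(k, j). take j (drop k v)) ` ({..length v} \<times> {..length v})"
  proof
    fix u assume "u \<in> {u. is_factor u v}"
    then obtain xs ys where v: "v = xs @ u @ ys" unfolding is_factor_def by blast
    then have "u = take (length u) (drop (length xs) v)" by simp
    moreover have "length xs \<le> length v" "length u \<le> length v" using v by auto
    ultimately show "u \<in> (\<lambda>(k, j). take j (drop k v)) ` ({..length v} \<times> {..length v})"
      by force
  qed
  then show ?thesis by (rule finite_subset) auto
qed

lemma count_list_a_add_count_list_b: "count_list xs a + count_list xs b = length xs"
proof (induction xs)
  case (Cons x xs) then show ?case by (cases x) auto
qed simp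

lemma abelian_square_append:
  assumes "length u = length v" "count_list u a = count_list v a"
  shows "abelian_square (u @ v)"
proof -
  have "count_list u b = count_list v b"
    using assms count_list_a_add_count_list_b[of u] count_list_a_add_count_list_b[of v] by simp
  then have "\<forall>c. count_list u c = count_list v c"
    using assms(2) by (metis letter.exhaust)
  then show ?thesis unfolding abelian_square_def by blast
qed

definition a_count :: "(nat \<Rightarrow> letter) \<Rightarrow> nat \<Rightarrow> nat \<Rightarrow> nat" where
  "a_count w p m = count_list (inf_factor w p m) a"

lemma a_count_add: "a_count w p (m + k) = a_count w p m + a_count w (p + m) k"
  by (simp add: a_count_def inf_factor_add)

lemma abelian_square_inf_factor_if_a_count_eq:
  assumes "a_count w p m = a_count w (p + m) m"
  shows "abelian_square (inf_factor w p (2 * m))"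
  using abelian_square_append[of "inf_factor w p m" "inf_factor w (p + m) m"] assms
  by (simp add: a_count_def mult_2 inf_factor_add)

section \<open>Sturmian words are balanced\<close>

definition slope_balanced :: "real \<Rightarrow> (nat \<Rightarrow> letter) \<Rightarrow> bool" where
  "slope_balanced \<alpha> w \<longleftrightarrow>
     (\<forall>p m. int (a_count w p m) = \<lfloor>real m * \<alpha>\<rfloor> \<or> int (a_count w p m) = \<lfloor>real m * \<alpha>\<rfloor> + 1)"

lemma int_eq_floor_or_floor_plus_1:
  fixes d :: int and y :: real
  assumes "y - 1 < d" "d < y + 1"
  shows "d = \<lfloor>y\<rfloor> \<or> d = \<lfloor>y\<rfloor> + 1"
proof -
  have "\<lfloor>y\<rfloor> - 1 < d" "d < \<lfloor>y\<rfloor> + 2"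
    using assms floor_correct[of y] by linarith+
  then show ?thesis by linarith
qed

lemma floor_add_diff:
  fixes x y :: real
  shows "\<lfloor>x + y\<rfloor> - \<lfloor>x\<rfloor> = \<lfloor>y\<rfloor> \<or> \<lfloor>x + y\<rfloor> - \<lfloor>x\<rfloor> = \<lfloor>y\<rfloor> + 1"
  by (rule int_eq_floor_or_floor_plus_1)
    (use floor_correct[of x] floor_correct[of "x + y"] in linarith)+

lemma ceiling_add_diff:
  fixes x y :: real
  shows "\<lceil>x + y\<rceil> - \<lceil>x\<rceil> = \<lfloor>y\<rfloor> \<or> \<lceil>x + y\<rceil> - \<lceil>x\<rceil> = \<lfloor>y\<rfloor> + 1"
  by (rule int_eq_floor_or_floor_plus_1)
    (use ceiling_correct[of x] ceiling_correct[of "x + y"] in linarith)+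

lemma floor_add_diff_eq_1_iff:
  fixes x \<alpha> :: real
  assumes "0 < \<alpha>" "\<alpha> < 1"
  shows "\<lfloor>x + \<alpha>\<rfloor> - \<lfloor>x\<rfloor> = 1 \<longleftrightarrow> \<not> frac x < 1 - \<alpha>"
  using assms floor_correct[of x] by (simp add: frac_def floor_eq_iff) linarith

lemma ceiling_add_diff_eq_1_iff:
  fixes x \<alpha> :: real
  assumes "0 < \<alpha>" "\<alpha> < 1"
  shows "\<lceil>x + \<alpha>\<rceil> - \<lceil>x\<rceil> = 1 \<longleftrightarrow> \<not> (0 < frac x \<and> frac x \<le> 1 - \<alpha>)"
  using assms floor_correct[of x] by (simp add: frac_def ceiling_altdef floor_eq_iff) linarith

lemma slope_balanced_if_counting_function:
  fixes F :: "nat \<Rightarrow> int"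
  assumes "0 < \<alpha>" "\<alpha> < 1"
    and F: "\<And>t L. F (t + L) - F t = \<lfloor>real L * \<alpha>\<rfloor> \<or> F (t + L) - F t = \<lfloor>real L * \<alpha>\<rfloor> + 1"
    and a_iff: "\<And>t. w t = a \<longleftrightarrow> F (Suc t) - F t = 1"
  shows "slope_balanced \<alpha> w"
proof -
  have "int (a_count w p m) = F (p + m) - F p" for p m
  proof (induction m)
    case (Suc m)
    have "\<lfloor>real 1 * \<alpha>\<rfloor> = 0" using assms(1,2) by (simp add: floor_eq_iff)
    then have "F (Suc (p + m)) - F (p + m) \<in> {0, 1}" using F[of "p + m" 1] by simp
    then show ?case
      using Suc a_iff[of "p + m"] by (auto simp: a_count_def inf_factor_Suc)
  qed (simp add: a_count_def inf_factor_def)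
  then show ?thesis unfolding slope_balanced_def using F by presburger
qed

lemma sturmian_slope_balanced:
  assumes "0 < \<alpha>" "\<alpha> < 1" "is_sturmian \<alpha> w"
  shows "slope_balanced \<alpha> w"
proof -
  obtain \<rho> where \<rho>: "w = sturmian_lower \<alpha> \<rho> \<or> w = sturmian_upper \<alpha> \<rho>"
    using assms(3) unfolding is_sturmian_def by blast
  have shift: "\<rho> + real (t + L) * \<alpha> = (\<rho> + real t * \<alpha>) + real L * \<alpha>"
    "\<rho> + real (Suc t) * \<alpha> = (\<rho> + real t * \<alpha>) + \<alpha>" for t L
    by (simp_all add: algebra_simps)
  from \<rho> show ?thesis
  proof
    assume "w = sturmian_lower \<alpha> \<rho>"
    then show ?thesis
      by (intro slope_balanced_if_counting_function[OF assms(1,2), of "\<lambda>t. \<lfloor>\<rho> + real t * \<alpha>\<rfloor>"])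
        (simp_all only: shift floor_add_diff floor_add_diff_eq_1_iff[OF assms(1,2)]
          sturmian_lower_def, auto)
  next
    assume "w = sturmian_upper \<alpha> \<rho>"
    then show ?thesis
      by (intro slope_balanced_if_counting_function[OF assms(1,2), of "\<lambda>t. \<lceil>\<rho> + real t * \<alpha>\<rceil>"])
        (simp_all only: shift ceiling_add_diff ceiling_add_diff_eq_1_iff[OF assms(1,2)]
          sturmian_upper_def, auto)
  qed
qed

section \<open>Lengths \<open>m\<close> with \<open>m\<alpha>\<close> close to an integer\<close>

definition near_integer :: "real \<Rightarrow> nat \<Rightarrow> bool" where
  "near_integer \<alpha> m \<longleftrightarrow> frac (real m * \<alpha>) < 1/4 \<or> 3/4 < frac (real m * \<alpha>)"

lemma floor_four_times:
  fixes x :: real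
  assumes "frac x < 1/4 \<or> 3/4 < frac x"
  shows "\<lfloor>4 * x\<rfloor> = 4 * \<lfloor>x\<rfloor> \<or> \<lfloor>4 * x\<rfloor> = 4 * \<lfloor>x\<rfloor> + 3"
  using assms floor_correct[of x] unfolding frac_def floor_eq_iff by linarith

lemma equal_a_count_among_three_blocks:
  assumes "slope_balanced \<alpha> w" "near_integer \<alpha> m"
  shows "\<exists>k<3. a_count w (p + k * m) m = a_count w (p + k * m + m) m"
proof (rule ccontr)
  assume no_equal_pair: "\<not> ?thesis"
  define d where "d k = int (a_count w (p + k * m) m)" for k
  define c where "c = \<lfloor>real m * \<alpha>\<rfloor>"
  have d_cases: "d k = c \<or> d k = c + 1" for k
    using assms(1) unfolding slope_balanced_def d_def c_def by blast
  have "d (Suc k) = int (a_count w (p + k * m + m) m)" for k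
    by (simp add: d_def add_ac)
  then have "d k \<noteq> d (Suc k)" if "k < 3" for k
    using no_equal_pair that by (auto simp: d_def)
  then have "d 0 \<noteq> d 1" "d 1 \<noteq> d 2" "d 2 \<noteq> d 3"
    by (simp_all add: numeral_eq_Suc)
  then have alternating: "d 0 + d 1 + d 2 + d 3 = 4 * c + 2"
    using d_cases[of 0] d_cases[of 1] d_cases[of 2] d_cases[of 3] by auto
  have "int (a_count w p (m + m + m + m)) = d 0 + d 1 + d 2 + d 3"
    by (simp add: a_count_add d_def numeral_eq_Suc add_ac)
  moreover have "real (m + m + m + m) * \<alpha> = 4 * (real m * \<alpha>)"
    by (simp add: algebra_simps)
  ultimately have "d 0 + d 1 + d 2 + d 3 = \<lfloor>4 * (real m * \<alpha>)\<rfloor> \<or>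
      d 0 + d 1 + d 2 + d 3 = \<lfloor>4 * (real m * \<alpha>)\<rfloor> + 1"
    using assms(1) unfolding slope_balanced_def by metis
  then show False
    using alternating floor_four_times[of "real m * \<alpha>"] assms(2)
    unfolding near_integer_def c_def by linarith
qed

lemma frac_diff_near_integer:
  fixes x y :: real
  assumes "\<lfloor>4 * frac x\<rfloor> = \<lfloor>4 * frac y\<rfloor>"
  shows "frac (y - x) < 1/4 \<or> 3/4 < frac (y - x)"
proof -
  have close: "\<bar>frac y - frac x\<bar> < 1/4"
    using assms floor_correct[of "4 * frac x"] floor_correct[of "4 * frac y"] by linarith
  show ?thesis
  proof (cases "frac x \<le> frac y")
    case True
    then show ?thesis using close frac_diff_pos[of x y] by auto
  next
    case False
    then show ?thesis using close frac_diff_neg[of y x] by auto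
  qed
qed

lemma exists_near_integer_multiple: "\<exists>j\<in>{1..4}. near_integer \<alpha> (j * m)"
proof -
  define bin where "bin j = \<lfloor>4 * frac (real (j * m) * \<alpha>)\<rfloor>" for j
  have "bin ` {0..4} \<subseteq> {0..3}"
    using frac_ge_0 frac_lt_1 by (fastforce simp: bin_def floor_less_iff)
  then have "card (bin ` {0..4}) < card {0..4::nat}"
    using card_mono[of "{0..3::int}" "bin ` {0..4}"] by simp
  then have "\<not> inj_on bin {0..4}" by (rule pigeonhole)
  then obtain j1 j2 where j: "j1 < j2" "j2 \<le> 4" "bin j1 = bin j2"
    unfolding inj_on_def by (metis atLeastAtMost_iff linorder_neqE_nat)
  have "real ((j2 - j1) * m) * \<alpha> = real (j2 * m) * \<alpha> - real (j1 * m) * \<alpha>"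
    using j(1) by (simp add: of_nat_diff diff_mult_distrib left_diff_distrib)
  then have "near_integer \<alpha> ((j2 - j1) * m)"
    using frac_diff_near_integer j(3) unfolding bin_def near_integer_def by metis
  then show ?thesis using j by (intro bexI[of _ "j2 - j1"]) auto
qed

lemma card_near_integer_ge: "A \<le> 4 * card {m. A \<le> m \<and> m < 8 * A \<and> near_integer \<alpha> m}"
proof -
  let ?M = "{m. A \<le> m \<and> m < 8 * A \<and> near_integer \<alpha> m}"
  let ?G = "\<lambda>j. {m\<in>{A..<2 * A}. near_integer \<alpha> (j * m)}"
  have "card (?G j) \<le> card ?M" if "j \<in> {1..4}" for j
  proof (rule card_inj_on_le)
    show "inj_on ((*) j) (?G j)" using that by (auto simp: inj_on_def)
    show "(*) j ` ?G j \<subseteq> ?M"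
      using that by (auto intro: order.trans[OF _ mult_le_mono[of 1 j A]]
          order.strict_trans1[OF mult_le_mono1[of j 4]])
    show "finite ?M" by (rule finite_subset[of _ "{..<8 * A}"]) auto
  qed
  then have "(\<Sum>j\<in>{1..4}. card (?G j)) \<le> 4 * card ?M"
    using sum_mono[of "{1..4::nat}" "\<lambda>j. card (?G j)" "\<lambda>_. card ?M"] by simp
  moreover have "{A..<2 * A} \<subseteq> (\<Union>j\<in>{1..4}. ?G j)"
    using exists_near_integer_multiple by blast
  then have "A \<le> card (\<Union>j\<in>{1..4}. ?G j)"
    using card_mono[of "\<Union>j\<in>{1..4}. ?G j" "{A..<2 * A}"] by simp
  ultimately show ?thesis
    using card_UN_le[of "{1..4::nat}" ?G] by simp
qed

section \<open>Occurrences of a factor in a power-free word\<close>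

lemma min_period_le:
  assumes "is_period d v"
  shows "0 < min_period v" "min_period v \<le> d"
proof -
  have "is_period (min_period v) v"
    unfolding min_period_def using assms by (rule LeastI)
  then show "0 < min_period v" by (simp add: is_period_def)
  show "min_period v \<le> d" unfolding min_period_def using assms by (rule Least_le)
qed

lemma is_period_inf_factor_if_repeated:
  assumes "0 < d" "inf_factor w p L = inf_factor w (p + d) L"
  shows "is_period d (inf_factor w p (d + L))"
  unfolding is_period_def
proof (intro conjI allI impI)
  fix j assume "j + d < length (inf_factor w p (d + L))"
  then have "j < L" by simp
  then have "w (p + j) = w (p + d + j)"
    using arg_cong[OF assms(2), of "\<lambda>v. v ! j"] by (simp add: inf_factor_def)
  with \<open>j < L\<close> show "inf_factor w p (d + L) ! j = inf_factor w p (d + L) ! (j + d)"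
    by (simp add: inf_factor_def add_ac)
qed (fact assms(1))

lemma power_free_repetition_distance:
  fixes \<beta> :: real
  assumes "power_free \<beta> w" "p < q" "0 < L" "inf_factor w p L = inf_factor w q L"
  shows "real L < (\<beta> - 1) * real (q - p)"
proof -
  obtain d where d: "0 < d" "q = p + d" using assms(2) less_imp_add_positive by blast
  let ?v = "inf_factor w p (d + L)"
  have "is_period d ?v"
    using d assms(4) by (intro is_period_inf_factor_if_repeated) auto
  then have "0 < min_period ?v" "min_period ?v \<le> d" by (rule min_period_le)+
  then have "real (d + L) / real d \<le> real (d + L) / real (min_period ?v)"
    by (intro divide_left_mono) auto
  also have "\<dots> < \<beta>"
    using assms(3) by (intro power_free_def[THEN iffD1, OF assms(1), rule_format]) simp
  finally show ?thesis
    using d by (simp add: divide_less_eq algebra_simps)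
qed

lemma card_occurrences_le:
  fixes \<beta> :: real
  assumes "power_free \<beta> w" "0 < L" "0 < s" "(\<beta> - 1) * real s \<le> real L"
  shows "card {p. i \<le> p \<and> p \<le> i + n \<and> inf_factor w p L = u} \<le> n div s + 1"
proof -
  let ?Y = "{p. i \<le> p \<and> p \<le> i + n \<and> inf_factor w p L = u}"
  have same_block_far: False
    if "p \<in> ?Y" "q \<in> ?Y" "p < q" "(p - i) div s = (q - i) div s" for p q
  proof -
    have "(p - i) div s * s + (p - i) mod s = p - i" "(q - i) mod s < s"
      using assms(3) by simp_all
    moreover have "(p - i) div s * s + (q - i) mod s = q - i"
      unfolding that(4) by simp
    moreover have "i \<le> p" "i \<le> q" "p < q" using that by auto
    ultimately have "q - p < s" by linarith
    have "real L < (\<beta> - 1) * real (q - p)"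
      using that by (intro power_free_repetition_distance[OF assms(1) _ assms(2)]) auto
    moreover have "0 < \<beta> - 1"
      using calculation assms(2) by (smt (verit) mult_nonpos_nonneg of_nat_0_le_iff of_nat_0_less_iff)
    ultimately have "real L < (\<beta> - 1) * real s"
      using \<open>q - p < s\<close> by (smt (verit) mult_strict_left_mono of_nat_less_iff)
    then show False using assms(4) by simp
  qed
  have "inj_on (\<lambda>p. (p - i) div s) ?Y"
  proof (rule inj_onI, rule ccontr)
    fix p q assume "p \<in> ?Y" "q \<in> ?Y" "(p - i) div s = (q - i) div s" "p \<noteq> q"
    then show False using same_block_far[of p q] same_block_far[of q p] by (cases "p < q") auto
  qed
  moreover have "(\<lambda>p. (p - i) div s) ` ?Y \<subseteq> {..n div s}"
    by (auto intro: div_le_mono)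
  ultimately show ?thesis
    using card_inj_on_le[of _ ?Y "{..n div s}"] by simp
qed

section \<open>Counting abelian squares\<close>

lemma card_le_mult_card_image:
  assumes "finite X" "\<And>y. card {x\<in>X. f x = y} \<le> K"
  shows "card X \<le> K * card (f ` X)"
proof -
  have "card X = card (\<Union>y\<in>f ` X. {x\<in>X. f x = y})"
    by (rule arg_cong[of _ _ card]) auto
  also have "\<dots> \<le> (\<Sum>y\<in>f ` X. card {x\<in>X. f x = y})"
    using assms(1) by (intro card_UN_le) simp
  also have "\<dots> \<le> K * card (f ` X)"
    using sum_bounded_above[of "f ` X" "\<lambda>y. card {x\<in>X. f x = y}" K] assms(2) by (simp add: mult.commute)
  finally show ?thesis .
qed

lemma card_abelian_square_positions_ge:
  assumes "slope_balanced \<alpha> w" "near_integer \<alpha> m" "5 * m \<le> n"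
  shows "m \<le> card {p. i \<le> p \<and> p + 2 * m \<le> i + n \<and> a_count w p m = a_count w (p + m) m}"
proof -
  let ?P = "{p. i \<le> p \<and> p + 2 * m \<le> i + n \<and> a_count w p m = a_count w (p + m) m}"
  obtain k where k: "\<And>p. k p < 3" "\<And>p. a_count w (p + k p * m) m = a_count w (p + k p * m + m) m"
    using equal_a_count_among_three_blocks[OF assms(1,2)] by metis
  let ?g = "\<lambda>p. p + k p * m"
  have "inj_on ?g {i..<i + m}"
  proof
    fix x y assume "x \<in> {i..<i + m}" "y \<in> {i..<i + m}" "?g x = ?g y"
    then have "(x - i + k x * m) mod m = (y - i + k y * m) mod m" "x - i < m" "y - i < m"
      by (auto simp: add.commute)
    then show "x = y" using \<open>x \<in> {i..<i + m}\<close> \<open>y \<in> {i..<i + m}\<close> by auto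
  qed
  moreover have "?g ` {i..<i + m} \<subseteq> ?P"
  proof
    fix y assume "y \<in> ?g ` {i..<i + m}"
    then obtain p where p: "p \<in> {i..<i + m}" "y = ?g p" by blast
    have "k p * m \<le> 2 * m" using k(1)[of p] by simp
    then have "y + 2 * m \<le> i + n" using p assms(3) unfolding atLeastLessThan_iff by linarith
    then show "y \<in> ?P" using k(2)[of p] p by auto
  qed
  moreover have "finite ?P" by (rule finite_subset[of _ "{..i + n}"]) auto
  ultimately show ?thesis using card_inj_on_le[of ?g "{i..<i + m}" ?P] by simp
qed

lemma card_abelian_squares_of_length_ge:
  fixes \<beta> :: real
  assumes "slope_balanced \<alpha> w" "power_free \<beta> w" "near_integer \<alpha> m" "0 < m" "5 * m \<le> n"
    and "0 < s" "(\<beta> - 1) * real s \<le> real (2 * m)"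
  shows "m \<le> (n div s + 1) *
    card {u. is_factor u (inf_factor w i n) \<and> abelian_square u \<and> length u = 2 * m}"
proof -
  let ?P = "{p. i \<le> p \<and> p + 2 * m \<le> i + n \<and> a_count w p m = a_count w (p + m) m}"
  let ?f = "\<lambda>p. inf_factor w p (2 * m)"
  have "card {p\<in>?P. ?f p = u} \<le> n div s + 1" for u
    using card_occurrences_le[OF assms(2) _ assms(6,7), of i n u] assms(4)
      card_mono[of "{p. i \<le> p \<and> p \<le> i + n \<and> ?f p = u}" "{p\<in>?P. ?f p = u}"] by force
  then have "card ?P \<le> (n div s + 1) * card (?f ` ?P)"
    by (intro card_le_mult_card_image) (rule finite_subset[of _ "{..i + n}"], auto)
  also have "\<dots> \<le> (n div s + 1) *
      card {u. is_factor u (inf_factor w i n) \<and> abelian_square u \<and> length u = 2 * m}"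
    using abelian_square_inf_factor_if_a_count_eq is_factor_inf_factor
    by (intro mult_le_mono2 card_mono) (auto intro: finite_subset[OF _ finite_factors])
  finally show ?thesis
    using card_abelian_square_positions_ge[OF assms(1,3,5), of i] by linarith
qed

lemma le_two_mult_div:
  fixes A B :: nat
  assumes "0 < B" "B \<le> A"
  shows "A \<le> 2 * B * (A div B)"
proof -
  have "A = B * (A div B) + A mod B" "A mod B < B"
    using assms(1) by simp_all
  then have "A < B * (A div B) + B" by linarith
  moreover have "B \<le> B * (A div B)"
    using assms div_le_mono[OF assms(2), of B] by simp
  ultimately show ?thesis by (simp only: mult.assoc)
qed

lemma abelian_squares_quadratic:
  fixes \<beta> :: real
  assumes "slope_balanced \<alpha> w" "power_free \<beta> w" "2 \<le> \<beta>" "80 * nat \<lceil>\<beta>\<rceil> \<le> n"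
  shows "n * n \<le> 6400 * 644 * nat \<lceil>\<beta>\<rceil> *
    card {u. is_factor u (inf_factor w i n) \<and> abelian_square u}"
proof -
  define B where "B = nat \<lceil>\<beta>\<rceil>"
  define A where "A = n div 40"
  define s where "s = A div B"
  \<comment> \<open>\<open>(\<beta> - 1) s \<le> A \<le> m\<close>: two occurrences of a factor of length \<open>2m\<close>
    never lie in one block of \<open>s\<close> positions\<close>
  define M where "M = {m. A \<le> m \<and> m < 8 * A \<and> near_integer \<alpha> m}"
  define T where "T m = {u. is_factor u (inf_factor w i n) \<and> abelian_square u \<and> length u = 2 * m}"
    for m
  have B: "2 \<le> B" "\<beta> \<le> real B" using assms(3) unfolding B_def by linarith+
  have A: "2 * B \<le> A" "40 * A \<le> n" "n \<le> 80 * A"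
    using assms(4) B(1) unfolding A_def B_def by linarith+
  have s: "0 < s" "B * s \<le> A" "A \<le> 2 * B * s"
    using A B(1) le_two_mult_div[of B A] div_le_mono[of B A B] by (auto simp: s_def)
  have "n div s * s \<le> 160 * B * s"
    using A(3) s(3) div_times_less_eq_dividend[of n s] by linarith
  then have ns: "n div s \<le> 160 * B" using s(1) by simp
  have "A * card M \<le> (\<Sum>m\<in>M. m)"
    using sum_bounded_below[of M A "\<lambda>m. m"] by (simp add: M_def mult.commute)
  also have "\<dots> \<le> (\<Sum>m\<in>M. (n div s + 1) * card (T m))"
  proof (rule sum_mono)
    fix m assume "m \<in> M"
    have "(\<beta> - 1) * real s \<le> real (B * s)"
      using B(2) by (simp add: mult_right_mono)
    also have "\<dots> \<le> real (2 * m)"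
      using s(2) \<open>m \<in> M\<close> unfolding M_def mem_Collect_eq of_nat_le_iff by linarith
    finally have "(\<beta> - 1) * real s \<le> real (2 * m)" .
    moreover have "5 * m \<le> n" "0 < m" "near_integer \<alpha> m"
      using \<open>m \<in> M\<close> A B(1) unfolding M_def mem_Collect_eq by linarith+
    ultimately show "m \<le> (n div s + 1) * card (T m)"
      using card_abelian_squares_of_length_ge[OF assms(1,2) _ _ _ s(1)] unfolding T_def by blast
  qed
  also have "\<dots> = (n div s + 1) * card (\<Union>m\<in>M. T m)"
    by (subst card_UN_disjoint)
      (auto simp: sum_distrib_left T_def M_def intro: finite_subset[OF _ finite_factors])
  also have "\<dots> \<le> 161 * B * card {u. is_factor u (inf_factor w i n) \<and> abelian_square u}"
    using ns B(1)
    by (intro mult_le_mono card_mono) (auto simp: T_def intro: finite_subset[OF _ finite_factors])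
  finally have "A * A \<le> 644 * B * card {u. is_factor u (inf_factor w i n) \<and> abelian_square u}"
    using card_near_integer_ge[of A \<alpha>] mult_le_mono2[of A "4 * card M" A]
    unfolding M_def by linarith
  then show ?thesis using mult_le_mono[OF A(3) A(3)] unfolding B_def by linarith
qed

theorem corollary3:
  fixes \<alpha> \<beta> :: real and w :: "nat \<Rightarrow> letter"
  assumes "0 < \<alpha>" "\<alpha> < 1" "\<alpha> \<notin> \<rat>"
    and "is_sturmian \<alpha> w"
    and "\<beta> \<ge> 2" "power_free \<beta> w"
  shows "unif_abelian_square_rich w"
  unfolding unif_abelian_square_rich_def
proof (intro exI[of _ "1 / (6400 * 644 * nat \<lceil>\<beta>\<rceil>)"] conjI exI[of _ "80 * nat \<lceil>\<beta>\<rceil>"] allI impI)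
  have B: "0 < real (nat \<lceil>\<beta>\<rceil>)" using assms(5) by simp
  then show "0 < 1 / real (6400 * 644 * nat \<lceil>\<beta>\<rceil>)" by simp
  fix n i :: nat assume "80 * nat \<lceil>\<beta>\<rceil> \<le> n"
  let ?T = "{u. is_factor u (inf_factor w i n) \<and> abelian_square u}"
  have "real (n * n) \<le> real (6400 * 644 * nat \<lceil>\<beta>\<rceil> * card ?T)"
    using abelian_squares_quadratic[OF sturmian_slope_balanced[OF assms(1,2,4)] assms(6,5)
        \<open>80 * nat \<lceil>\<beta>\<rceil> \<le> n\<close>, of i]
    by (simp only: of_nat_le_iff)
  then have "real n ^ 2 \<le> 6400 * 644 * real (nat \<lceil>\<beta>\<rceil>) * real (card ?T)"
    by (simp add: power2_eq_square)
  then show "1 / real (6400 * 644 * nat \<lceil>\<beta>\<rceil>) * real n ^ 2 \<le> real (card ?T)"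
    using B by (simp add: field_simps)
qed

end
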